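(* Let $d>1$ be an integer. (a) If $d$ is even, each even node of $\Gamma_d$ has exactly two outgoing black arrows and no outgoing red arrows, and each odd node has exactly two outgoing red arrows and no outgoing black arrows; if $d$ is odd, each node has exactly one outgoing red arrow and exactly one outgoing black arrow. (b) If $3\mid d$, each node congruent to $2\bmod 3$ has exactly one incoming black arrow and at least one incoming red arrow, and every other node has exactly one incoming black arrow and no incoming red arrow; if $3\nmid d$, every node has exactly one incoming black arrow and exactly one incoming red arrow. (c) If $\gcd(d,6)=1$, the black arrows partition the nodes into disjoint directed cycles, among which there is exactly one loop, at $0$, and all black cycles have length dividing the multiplicative order of $2$ mod $d$; likewise the red arrows partition the nodes into disjoint directed cycles, among which there is exactly one loop, at $d-1$, and all red cycles have length dividing the multiplicative order of $3/2$ mod $d$. (d) If $d=3^m$, the black arrows form a single directed cycle on the nodes relatively prime to $3$; for each $i=1,\dots,m-1$ they form a single directed cycle on the nodes divisible by $3^i$ but not $3^{i+1}$; and there is a black loop at $0$. (e) If $d=3^m$, the red arrows form a rooted tree with root $3^m-1$ and all arrows oriented toward the root, together with a red loop at the root; the leaves are the nodes not congruent to $2\bmod 3$, and the red path starting from any leaf first reaches the root after exactly $m$ steps.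
   Context: Let $T_0(x)=x/2$ and $T_1(x)=(3x+1)/2$. For a positive integer $d$, $\Gamma_d$ is the directed graph with vertex set $\mathbb{Z}/d\mathbb{Z}$ and two kinds of arrows: a black arrow $r\to s$ iff there exist positive integers $x\equiv r$, $y\equiv s\pmod d$ with $x$ even and $T_0(x)=y$; a red arrow $r\to s$ iff there exist positive integers $x\equiv r$, $y\equiv s\pmod d$ with $x$ odd and $T_1(x)=y$. *)

theory Defs
  imports Main "HOL-Number_Theory.Number_Theory"
begin

definition black_arrow :: "nat \<Rightarrow> nat \<Rightarrow> nat \<Rightarrow> bool" where
  "black_arrow d r s \<longleftrightarrow> r < d \<and> s < d \<and>
     (\<exists>x y::nat. x > 0 \<and> y > 0 \<and> x mod d = r \<and> y mod d = s \<and> even x \<and> 2 * y = x)"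

definition red_arrow :: "nat \<Rightarrow> nat \<Rightarrow> nat \<Rightarrow> bool" where
  "red_arrow d r s \<longleftrightarrow> r < d \<and> s < d \<and>
     (\<exists>x y::nat. x > 0 \<and> y > 0 \<and> x mod d = r \<and> y mod d = s \<and> odd x \<and> 2 * y = 3 * x + 1)"

definition cycle_len :: "(nat \<Rightarrow> nat) \<Rightarrow> nat \<Rightarrow> nat" where
  "cycle_len f r = (LEAST k. k > 0 \<and> (f ^^ k) r = r)"

text \<open>The arrows of relation R, restricted to the node set S, partition S into disjoint
  directed cycles, realised by the permutation f of S.\<close>
definition cycles_via :: "(nat \<Rightarrow> nat \<Rightarrow> bool) \<Rightarrow> nat set \<Rightarrow> (nat \<Rightarrow> nat) \<Rightarrow> bool" where
  "cycles_via R S f \<longleftrightarrow> bij_betw f S S \<and> (\<forall>r\<in>S. \<forall>s. R r s \<longleftrightarrow> s = f r)"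

definition single_cycle :: "(nat \<Rightarrow> nat \<Rightarrow> bool) \<Rightarrow> nat set \<Rightarrow> bool" where
  "single_cycle R S \<longleftrightarrow> S \<noteq> {} \<and> (\<exists>f. cycles_via R S f \<and>
      (\<forall>r\<in>S. \<forall>s\<in>S. \<exists>k. (f ^^ k) r = s))"

end

theory Submission
  imports Defs
begin

text \<open>
  Both kinds of arrows are first described purely by congruences: a black arrow
  r \<rightarrow> s means 2s = r (mod d), and a red arrow r \<rightarrow> s means that some odd lift x of r
  has (3x+1)/2 = s (mod d).  For even d parity is preserved modulo d, which gives the two
  out-arrows of part (a); the in-arrows of part (b) are governed by the facts that 2 is always
  cancellable on the left of 2s = r and that (3x+1)/2 is 2 mod 3 for odd x.

  For odd d, 2 has the inverse h = (d+1)/2 modulo d, so both arrow relations are functions: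
  the black map r \<mapsto> h r and the red map r \<mapsto> h (3r+1).  The black map is multiplication by h,
  and after the shift r \<mapsto> r+1 the red map becomes multiplication by 3h = 3/2.  Iterating
  these linear maps yields the cycle lengths of part (c).  For d = 3^m, 2 is a primitive root
  modulo every power of 3, which makes the black map transitive on each 3-adic valuation layer
  (part (d)); and the iterates of the shifted red map carry the factor 3^k, so every node
  reaches the root d-1 after m steps, exactly m steps for leaves (part (e)).
\<close>

lemma black_arrow_iff:
  assumes "d > 0"
  shows "black_arrow d r s \<longleftrightarrow> r < d \<and> s < d \<and> (2 * s) mod d = r"
proof
  assume "black_arrow d r s"
  then obtain x y :: nat where "r < d" "s < d" "x mod d = r" "y mod d = s" "2 * y = x"
    unfolding black_arrow_def by blast
  then show "r < d \<and> s < d \<and> (2 * s) mod d = r"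
    by (metis mod_mult_right_eq)
next
  assume r_s: "r < d \<and> s < d \<and> (2 * s) mod d = r"
  \<comment> \<open>The lift \<open>s + d\<close> is positive even when \<open>s = 0\<close>.\<close>
  have "(s + d) mod d = s" "(2 * (s + d)) mod d = r"
    using r_s by (simp_all add: algebra_simps)
  moreover have "s + d > 0" "2 * (s + d) > 0" using assms by simp_all
  ultimately show "black_arrow d r s"
    unfolding black_arrow_def using r_s by (intro conjI exI[of _ "2 * (s + d)"] exI[of _ "s + d"]) simp_all
qed

lemma red_arrow_iff:
  assumes "d > 0"
  shows "red_arrow d r s \<longleftrightarrow>
    r < d \<and> s < d \<and> (\<exists>x. odd x \<and> x mod d = r \<and> ((3 * x + 1) div 2) mod d = s)"
proof
  assume "red_arrow d r s"
  then obtain x y :: nat where "r < d" "s < d" "x mod d = r" "y mod d = s" "odd x" "2 * y = 3 * x + 1"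
    unfolding red_arrow_def by blast
  moreover from \<open>2 * y = 3 * x + 1\<close> have "y = (3 * x + 1) div 2" by simp
  ultimately show "r < d \<and> s < d \<and> (\<exists>x. odd x \<and> x mod d = r \<and> ((3 * x + 1) div 2) mod d = s)"
    by blast
next
  assume "r < d \<and> s < d \<and> (\<exists>x. odd x \<and> x mod d = r \<and> ((3 * x + 1) div 2) mod d = s)"
  then obtain x where r_s: "r < d" "s < d" and x: "odd x" "x mod d = r" "((3 * x + 1) div 2) mod d = s"
    by blast
  \<comment> \<open>Shifting \<open>x\<close> by \<open>2 d\<close> keeps parity and residues but makes it positive.\<close>
  define x' where "x' = x + 2 * d"
  have "(3 * x' + 1) div 2 = (3 * x + 1) div 2 + 3 * d"
    unfolding x'_def by simp
  then have "odd x'" "x' mod d = r" "((3 * x' + 1) div 2) mod d = s" "2 * ((3 * x' + 1) div 2) = 3 * x' + 1"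
    using x unfolding x'_def by simp_all
  moreover have "x' > 0" "(3 * x' + 1) div 2 > 0" using assms unfolding x'_def by simp_all
  ultimately show "red_arrow d r s"
    unfolding red_arrow_def using r_s by blast
qed

lemma even_mod_even_modulus:
  assumes "even (d::nat)"
  shows "even (x mod d) \<longleftrightarrow> even x"
proof -
  have "x mod d mod 2 = x mod 2" using assms by (simp add: mod_mod_cancel)
  then show ?thesis by (simp add: even_iff_mod_2_eq_zero)
qed

lemma black_out_even_modulus:
  assumes "even d" "d > 1" "r < d"
  shows "even r \<Longrightarrow> {s. black_arrow d r s} = {r div 2, r div 2 + d div 2}"
    and "odd r \<Longrightarrow> {s. black_arrow d r s} = {}"
proof -
  obtain e where e: "d = 2 * e" using assms(1) by blast
  have double_mod: "(2 * s) mod d = 2 * (s mod e)" for s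
    using e by (simp add: mod_mult_mult1)
  show "odd r \<Longrightarrow> {s. black_arrow d r s} = {}"
    using black_arrow_iff[of d r] double_mod assms(2) by auto
  assume "even r"
  have "black_arrow d r s \<longleftrightarrow> s < 2 * e \<and> s mod e = r div 2" for s
    using black_arrow_iff[of d r s] double_mod[of s] assms \<open>even r\<close> e by auto
  also have "\<dots> s \<longleftrightarrow> s = r div 2 \<or> s = r div 2 + e" for s
  proof (cases "s < e")
    case False
    then have "s mod e = s - e" if "s < 2 * e" using that by (simp add: le_mod_geq)
    then show ?thesis using False assms(3) e by auto
  qed (use assms(3) e in auto)
  finally show "{s. black_arrow d r s} = {r div 2, r div 2 + d div 2}"
    using e by auto
qed

text \<open>For d = 2e and odd r, the image (3x+1)/2 of the lift x = r + kd is a + 3ek with a = (3r+1)/2,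
  so modulo d it depends only on the parity of k.\<close>

lemma red_image_of_lift:
  assumes "d = 2 * (e::nat)" "2 * a = 3 * r + 1"
  shows "(3 * (r + d * k) + 1) div 2 mod d = (if even k then a mod d else (a + e) mod d)"
proof -
  have lift: "(3 * (r + d * k) + 1) div 2 = a + 3 * e * k"
    using assms by (simp add: algebra_simps)
  show ?thesis
  proof (cases "even k")
    case True
    then obtain j where "k = 2 * j" by blast
    then have "a + 3 * e * k = a + d * (3 * j)" using assms(1) by simp
    then show ?thesis unfolding lift using True by (simp only:) simp
  next
    case False
    then obtain j where "k = 2 * j + 1" using oddE by blast
    then have "a + 3 * e * k = (a + e) + d * (3 * j + 1)" using assms(1) by (simp add: algebra_simps)
    then show ?thesis unfolding lift using False by (simp only: if_False mod_mult_self2)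
  qed
qed

text \<open>Out-arrows for even d: even nodes have no red successor (all their lifts are even), odd nodes
  have exactly the two successors provided by the two parities of lifts.\<close>

lemma red_out_even_modulus:
  assumes "even d" "d > 1" "r < d"
  shows "even r \<Longrightarrow> {s. red_arrow d r s} = {}"
    and "odd r \<Longrightarrow> card {s. red_arrow d r s} = 2"
proof -
  show "even r \<Longrightarrow> {s. red_arrow d r s} = {}"
    using red_arrow_iff[of d r] even_mod_even_modulus[OF assms(1)] assms(2) by auto
  assume "odd r"
  obtain e where e: "d = 2 * e" using assms(1) by blast
  define a where "a = (3 * r + 1) div 2"
  have a: "2 * a = 3 * r + 1" using \<open>odd r\<close> unfolding a_def by presburger
  note image_of_lift = red_image_of_lift[OF e a]
  have "{s. red_arrow d r s} = {a mod d, (a + e) mod d}"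
  proof (intro Set.set_eqI iffI)
    fix s assume "s \<in> {s. red_arrow d r s}"
    then obtain x where x: "odd x" "x mod d = r" "(3 * x + 1) div 2 mod d = s"
      using red_arrow_iff[of d r s] assms(2) by auto
    have "x = r + d * (x div d)" using x(2) mod_mult_div_eq[of x d] by simp
    then show "s \<in> {a mod d, (a + e) mod d}"
      using image_of_lift[of "x div d"] x(3) by (metis insert_iff)
  next
    fix s assume "s \<in> {a mod d, (a + e) mod d}"
    then have "s = (3 * (r + d * 0) + 1) div 2 mod d \<or> s = (3 * (r + d * 1) + 1) div 2 mod d"
      unfolding image_of_lift by simp
    then obtain k :: nat where "s = (3 * (r + d * k) + 1) div 2 mod d" by blast
    moreover have "odd (r + d * k)" "(r + d * k) mod d = r" using \<open>odd r\<close> assms by simp_all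
    ultimately have "\<exists>x. odd x \<and> x mod d = r \<and> (3 * x + 1) div 2 mod d = s" by blast
    then show "s \<in> {s. red_arrow d r s}"
      using red_arrow_iff[of d r s] assms \<open>s = _\<close> by simp
  qed
  moreover have "a mod d \<noteq> (a + e) mod d"
  proof
    assume "a mod d = (a + e) mod d"
    then have "2 * e dvd e" using e mod_eq_dvd_iff_nat[of a "a + e" d] by simp
    then show False using e assms(2) by simp
  qed
  ultimately show "card {s. red_arrow d r s} = 2" by simp
qed

lemma out_arrows_even_modulus:
  assumes "even d" "d > 1"
  shows "\<forall>r<d. (even r \<longrightarrow> card {s. black_arrow d r s} = 2 \<and> {s. red_arrow d r s} = {}) \<and>
               (odd r \<longrightarrow> card {s. red_arrow d r s} = 2 \<and> {s. black_arrow d r s} = {})"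
proof (intro allI impI conjI)
  fix r assume r: "r < d"
  have "r div 2 \<noteq> r div 2 + d div 2" using assms by auto
  then show "even r \<Longrightarrow> card {s. black_arrow d r s} = 2"
    using black_out_even_modulus(1)[OF assms r] by simp
  show "odd r \<Longrightarrow> {s. black_arrow d r s} = {}" using black_out_even_modulus(2)[OF assms r] .
  show "even r \<Longrightarrow> {s. red_arrow d r s} = {}" using red_out_even_modulus(1)[OF assms r] .
  show "odd r \<Longrightarrow> card {s. red_arrow d r s} = 2" using red_out_even_modulus(2)[OF assms r] .
qed

text \<open>For odd d, half d is the inverse of 2 modulo d; dividing by 2 becomes multiplication by it.
  This turns both arrow relations into maps on residues.\<close>

definition half :: "nat \<Rightarrow> nat" where
  "half d = (d + 1) div 2"

definition black_map :: "nat \<Rightarrow> nat \<Rightarrow> nat" where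
  "black_map d r = half d * r mod d"

definition red_map :: "nat \<Rightarrow> nat \<Rightarrow> nat" where
  "red_map d r = half d * (3 * r + 1) mod d"

lemma two_half_cong:
  assumes "odd d"
  shows "[2 * half d = 1] (mod d)"
proof -
  have "2 * half d = 1 + d" using assms unfolding half_def by presburger
  moreover have "[1 + d = 1 + 0] (mod d)" by (intro cong_add) (simp_all add: cong_0_iff)
  ultimately show ?thesis by simp
qed

lemma coprime_half:
  assumes "odd d"
  shows "coprime (half d) d"
proof -
  have "coprime (2 * half d) d"
    using cong_imp_coprime[OF cong_sym[OF two_half_cong[OF assms]]] by simp
  then show ?thesis by simp
qed

lemma halving_cong:
  assumes "odd d"
  shows "[2 * s = a] (mod d) \<longleftrightarrow> [s = half d * a] (mod d)"
proof
  assume "[2 * s = a] (mod d)"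
  then have "[half d * (2 * s) = half d * a] (mod d)" by (rule cong_scalar_left)
  moreover have "[half d * (2 * s) = s] (mod d)"
    using cong_scalar_right[OF two_half_cong[OF assms], of s] by (simp add: ac_simps)
  ultimately show "[s = half d * a] (mod d)" using cong_sym cong_trans by blast
next
  assume "[s = half d * a] (mod d)"
  then have "[2 * s = 2 * (half d * a)] (mod d)" by (rule cong_scalar_left)
  then have "[2 * s = 2 * half d * a] (mod d)" by (simp only: mult.assoc)
  moreover have "[2 * half d * a = a] (mod d)"
    using cong_scalar_right[OF two_half_cong[OF assms], of a] by simp
  ultimately show "[2 * s = a] (mod d)" by (rule cong_trans)
qed

lemma black_arrow_odd_modulus:
  assumes "odd d" "d > 1"
  shows "black_arrow d r s \<longleftrightarrow> r < d \<and> s = black_map d r"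
proof -
  have "black_arrow d r s \<longleftrightarrow> r < d \<and> s < d \<and> [2 * s = r] (mod d)"
    using black_arrow_iff[of d r s] assms(2) by (auto simp: cong_def)
  also have "\<dots> \<longleftrightarrow> r < d \<and> s = black_map d r"
    using halving_cong[OF assms(1)] assms(2) unfolding black_map_def cong_def by auto
  finally show ?thesis .
qed

text \<open>For odd d a red arrow r \<rightarrow> s means exactly 2s \<equiv> 3r+1, since every residue has an odd lift.\<close>

lemma red_arrow_odd_modulus_cong:
  assumes "odd d" "d > 1"
  shows "red_arrow d r s \<longleftrightarrow> r < d \<and> s < d \<and> [2 * s = 3 * r + 1] (mod d)"
proof -
  have twice_image: "[2 * ((3 * x + 1) div 2) = 3 * r + 1] (mod d)" if "odd x" "x mod d = r" for x
  proof -
    have "[x = r] (mod d)" unfolding cong_def using that(2) by (metis mod_mod_trivial)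
    then have "[3 * x + 1 = 3 * r + 1] (mod d)" by (intro cong_add cong_scalar_left cong_refl)
    moreover have "2 * ((3 * x + 1) div 2) = 3 * x + 1" using that(1) by presburger
    ultimately show ?thesis by simp
  qed
  show ?thesis
  proof
    assume "red_arrow d r s"
    then obtain x where x: "r < d" "s < d" "odd x" "x mod d = r" "(3 * x + 1) div 2 mod d = s"
      using red_arrow_iff[of d r s] assms(2) by auto
    have "[s = (3 * x + 1) div 2] (mod d)" using x(2,5) by (simp add: cong_def)
    then have "[2 * s = 2 * ((3 * x + 1) div 2)] (mod d)" by (rule cong_scalar_left)
    then have "[2 * s = 3 * r + 1] (mod d)" using twice_image[OF x(3,4)] by (rule cong_trans)
    then show "r < d \<and> s < d \<and> [2 * s = 3 * r + 1] (mod d)" using x by blast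
  next
    assume r_s: "r < d \<and> s < d \<and> [2 * s = 3 * r + 1] (mod d)"
    \<comment> \<open>Since \<open>d\<close> is odd, one of \<open>r\<close>, \<open>r + d\<close> is an odd lift of \<open>r\<close>.\<close>
    define x where "x = (if odd r then r else r + d)"
    have x: "odd x" "x mod d = r" using assms(1) r_s unfolding x_def by auto
    have "[2 * ((3 * x + 1) div 2) = 2 * s] (mod d)"
      using twice_image[OF x] r_s cong_sym cong_trans by blast
    then have "[(3 * x + 1) div 2 = s] (mod d)"
      using cong_mult_lcancel_nat[of 2 d] assms(1) by simp
    then have "(3 * x + 1) div 2 mod d = s" using r_s by (simp add: cong_def)
    then show "red_arrow d r s" using red_arrow_iff[of d r s] assms(2) r_s x by blast
  qed
qed

lemma red_arrow_odd_modulus: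
  assumes "odd d" "d > 1"
  shows "red_arrow d r s \<longleftrightarrow> r < d \<and> s = red_map d r"
  using red_arrow_odd_modulus_cong[OF assms] halving_cong[OF assms(1)] assms(2)
  unfolding red_map_def cong_def by auto

lemma out_arrows_odd_modulus:
  assumes "odd d" "d > 1"
  shows "\<forall>r<d. card {s. black_arrow d r s} = 1 \<and> card {s. red_arrow d r s} = 1"
proof (intro allI impI)
  fix r assume "r < d"
  then have "{s. black_arrow d r s} = {black_map d r}" "{s. red_arrow d r s} = {red_map d r}"
    using black_arrow_odd_modulus[OF assms] red_arrow_odd_modulus[OF assms] by auto
  then show "card {s. black_arrow d r s} = 1 \<and> card {s. red_arrow d r s} = 1" by simp
qed

lemma black_in:
  assumes "d > 1" "r < d"
  shows "{s. black_arrow d s r} = {(2 * r) mod d}"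
proof (rule Set.set_eqI)
  fix s
  show "s \<in> {s. black_arrow d s r} \<longleftrightarrow> s \<in> {(2 * r) mod d}"
    using black_arrow_iff[of d s r] assms by auto
qed

text \<open>Images of odd numbers under (3x+1)/2 are 2 mod 3; this controls red in-arrows when 3 divides d.\<close>

lemma image_mod_3:
  assumes "odd (x::nat)"
  shows "((3 * x + 1) div 2) mod 3 = 2"
  using assms by presburger

lemma red_in_multiple_of_3:
  assumes "3 dvd d" "d > 1" "r < d"
  shows "(\<exists>s. red_arrow d s r) \<longleftrightarrow> r mod 3 = 2"
proof
  assume "\<exists>s. red_arrow d s r"
  then obtain x where "odd x" "((3 * x + 1) div 2) mod d = r"
    using red_arrow_iff[of d _ r] assms(2) by auto
  then show "r mod 3 = 2"
    using image_mod_3 mod_mod_cancel[OF assms(1), of "(3 * x + 1) div 2"] by simp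
next
  assume "r mod 3 = 2"
  define x where "x = (2 * r - 1) div 3"
  have "odd x" "(3 * x + 1) div 2 = r" using \<open>r mod 3 = 2\<close> unfolding x_def by presburger+
  then have "red_arrow d (x mod d) r" using red_arrow_iff[of d "x mod d" r] assms by auto
  then show "\<exists>s. red_arrow d s r" by blast
qed

text \<open>When 3 does not divide d, every node has exactly one red predecessor: 3 is cancellable.\<close>

lemma red_in_not_multiple_of_3:
  assumes "\<not> 3 dvd d" "d > 1" "r < d"
  shows "card {s. red_arrow d s r} = 1"
proof -
  \<comment> \<open>Some lift \<open>y\<close> of \<open>r\<close> is \<open>2 mod 3\<close>, hence an image \<open>(3x+1)/2\<close> of an odd \<open>x\<close>.\<close>
  obtain y where y: "y mod 3 = 2" "y mod d = r"
  proof -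
    have "r mod 3 = 2 \<or> (r + d) mod 3 = 2 \<or> (r + 2 * d) mod 3 = 2" using assms(1) by presburger
    moreover have "r mod d = r" "(r + d) mod d = r" "(r + 2 * d) mod d = r" using assms by simp_all
    ultimately show ?thesis using that by blast
  qed
  define x where "x = (2 * y - 1) div 3"
  have "odd x" "(3 * x + 1) div 2 = y" using y(1) unfolding x_def by presburger+
  then have ex: "red_arrow d (x mod d) r" using red_arrow_iff[of d "x mod d" r] assms y by auto
  \<comment> \<open>Two preimages have congruent \<open>3x+1\<close>, and \<open>3\<close> is invertible modulo \<open>d\<close>.\<close>
  have unique: "s1 = s2" if s1: "red_arrow d s1 r" and s2: "red_arrow d s2 r" for s1 s2
  proof -
    obtain x1 where x1: "odd x1" "x1 mod d = s1" "((3 * x1 + 1) div 2) mod d = r" "s1 < d"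
      using red_arrow_iff[of d s1 r] assms s1 by auto
    obtain x2 where x2: "odd x2" "x2 mod d = s2" "((3 * x2 + 1) div 2) mod d = r" "s2 < d"
      using red_arrow_iff[of d s2 r] assms s2 by auto
    have "[(3 * x1 + 1) div 2 = (3 * x2 + 1) div 2] (mod d)" using x1(3) x2(3) by (simp add: cong_def)
    then have "[2 * ((3 * x1 + 1) div 2) = 2 * ((3 * x2 + 1) div 2)] (mod d)" by (rule cong_scalar_left)
    moreover have "2 * ((3 * x1 + 1) div 2) = 3 * x1 + 1" "2 * ((3 * x2 + 1) div 2) = 3 * x2 + 1"
      using x1(1) x2(1) by presburger+
    ultimately have "[3 * x1 + 1 = 3 * x2 + 1] (mod d)" by simp
    then have "[3 * x1 = 3 * x2] (mod d)" by (simp only: cong_add_rcancel_nat)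
    moreover have "coprime 3 d" using assms(1) by (intro prime_imp_coprime) auto
    ultimately have "[x1 = x2] (mod d)" by (simp add: cong_mult_lcancel_nat)
    then show ?thesis using x1(2) x2(2) by (simp add: cong_def)
  qed
  have "{s. red_arrow d s r} = {x mod d}" using ex unique by blast
  then show ?thesis by simp
qed

lemma in_arrows_multiple_of_3:
  assumes "3 dvd d" "d > 1"
  shows "\<forall>r<d. (r mod 3 = 2 \<longrightarrow> card {s. black_arrow d s r} = 1 \<and> {s. red_arrow d s r} \<noteq> {}) \<and>
               (r mod 3 \<noteq> 2 \<longrightarrow> card {s. black_arrow d s r} = 1 \<and> {s. red_arrow d s r} = {})"
  using black_in[OF assms(2)] red_in_multiple_of_3[OF assms] by auto

lemma in_arrows_not_multiple_of_3:
  assumes "\<not> 3 dvd d" "d > 1"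
  shows "\<forall>r<d. card {s. black_arrow d s r} = 1 \<and> card {s. red_arrow d s r} = 1"
  using black_in[OF assms(2)] red_in_not_multiple_of_3[OF assms] by auto

lemma black_loop:
  assumes "d > 1" "r < d"
  shows "black_arrow d r r \<longleftrightarrow> r = 0"
proof -
  have "black_arrow d r r \<longleftrightarrow> [r + r = 0 + r] (mod d)"
    using black_arrow_iff[of d r r] assms by (simp add: cong_def mult_2)
  also have "\<dots> \<longleftrightarrow> d dvd r" by (simp only: cong_add_rcancel_nat cong_0_iff)
  also have "\<dots> \<longleftrightarrow> r = 0" using assms(2) by (auto dest: dvd_imp_le)
  finally show ?thesis .
qed

lemma red_loop:
  assumes "odd d" "d > 1" "r < d"
  shows "red_arrow d r r \<longleftrightarrow> r = d - 1"
proof -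
  have "red_arrow d r r \<longleftrightarrow> [2 * r = 3 * r + 1] (mod d)"
    using red_arrow_odd_modulus_cong[OF assms(1,2), of r r] assms(3) by simp
  also have "\<dots> \<longleftrightarrow> [(r + 1) + 2 * r = 0 + 2 * r] (mod d)"
    unfolding cong_sym_eq[of "2 * r"] by (simp add: algebra_simps)
  also have "\<dots> \<longleftrightarrow> d dvd r + 1" by (simp only: cong_add_rcancel_nat cong_0_iff)
  also have "\<dots> \<longleftrightarrow> r = d - 1" using assms(3) by (auto dest: dvd_imp_le)
  finally show ?thesis .
qed

lemma black_map_inj:
  assumes "odd d"
  shows "inj_on (black_map d) {..<d}"
proof (rule inj_onI)
  fix a b assume ab: "a \<in> {..<d}" "b \<in> {..<d}" "black_map d a = black_map d b"
  then have "[half d * a = half d * b] (mod d)" unfolding black_map_def cong_def by simp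
  then have "[a = b] (mod d)" using cong_mult_lcancel_nat[OF coprime_half[OF assms]] by blast
  then show "a = b" using ab(1,2) by (simp add: cong_less_modulus_unique_nat)
qed

lemma red_map_inj:
  assumes "odd d" "\<not> 3 dvd d"
  shows "inj_on (red_map d) {..<d}"
proof (rule inj_onI)
  fix a b assume ab: "a \<in> {..<d}" "b \<in> {..<d}" "red_map d a = red_map d b"
  then have "[half d * (3 * a + 1) = half d * (3 * b + 1)] (mod d)" unfolding red_map_def cong_def by simp
  then have "[3 * a + 1 = 3 * b + 1] (mod d)" using cong_mult_lcancel_nat[OF coprime_half[OF assms(1)]] by blast
  then have "[3 * a = 3 * b] (mod d)" by (simp only: cong_add_rcancel_nat)
  moreover have "coprime 3 d" using assms(2) by (intro prime_imp_coprime) auto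
  ultimately have "[a = b] (mod d)" by (simp add: cong_mult_lcancel_nat)
  then show "a = b" using ab(1,2) by (simp add: cong_less_modulus_unique_nat)
qed

lemma cycles_via_intro:
  assumes "finite S" "F ` S \<subseteq> S" "inj_on F S" "\<forall>r\<in>S. \<forall>s. R r s \<longleftrightarrow> s = F r"
  shows "cycles_via R S F"
  using assms endo_inj_surj[OF assms(1-3)] unfolding cycles_via_def bij_betw_def by blast

lemma cycle_len_dvd:
  assumes "(f ^^ n) r = r"
  shows "cycle_len f r dvd n"
proof (cases "n = 0")
  case False
  let ?c = "cycle_len f r"
  have c: "?c > 0" "(f ^^ ?c) r = r"
    using LeastI[of "\<lambda>k. k > 0 \<and> (f ^^ k) r = r" n] False assms unfolding cycle_len_def by auto
  have multiples: "(f ^^ (q * ?c)) r = r" for q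
    by (induction q) (simp_all add: funpow_add c(2))
  have "(f ^^ (n mod ?c)) ((f ^^ (n div ?c * ?c)) r) = r"
    using assms by (metis funpow_add comp_apply div_mult_mod_eq add.commute)
  then have "(f ^^ (n mod ?c)) r = r" by (simp only: multiples)
  then have "\<not> n mod ?c > 0"
    using Least_le[of "\<lambda>k. k > 0 \<and> (f ^^ k) r = r" "n mod ?c"] mod_less_divisor[OF c(1), of n]
    unfolding cycle_len_def by auto
  then show ?thesis by (simp add: mod_greater_zero_iff_not_dvd)
qed simp

lemma funpow_less:
  assumes "r < d" "\<And>x. F x < (d::nat)"
  shows "(F ^^ n) r < d"
  using assms by (induction n) auto

lemma funpow_linear_cong:
  assumes "\<And>x. [\<phi> (F x) = c * \<phi> x] (mod d)"
  shows "[\<phi> ((F ^^ k) x) = c ^ k * \<phi> x] (mod (d::nat))"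
proof (induction k)
  case (Suc k)
  have "[\<phi> ((F ^^ Suc k) x) = c * \<phi> ((F ^^ k) x)] (mod d)" using assms by simp
  also have "[c * \<phi> ((F ^^ k) x) = c * (c ^ k * \<phi> x)] (mod d)" using Suc by (rule cong_scalar_left)
  finally show ?case by (simp add: ac_simps)
qed simp

lemma red_map_shift_cong:
  assumes "odd d"
  shows "[Suc (red_map d r) = 3 * half d * Suc r] (mod d)"
proof -
  have "[Suc (red_map d r) = half d * (3 * r + 1) + 1] (mod d)"
    unfolding red_map_def cong_def by (simp add: mod_Suc_eq)
  also have "[half d * (3 * r + 1) + 1 = half d * (3 * r + 1) + 2 * half d] (mod d)"
    using cong_sym[OF two_half_cong[OF assms]] by (intro cong_add cong_refl)
  also have "half d * (3 * r + 1) + 2 * half d = 3 * half d * Suc r" by (simp add: algebra_simps)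
  finally show ?thesis .
qed

lemma power_of_inverse_cong:
  assumes "[a * b = 1] (mod d)" "[a ^ n = 1] (mod d)"
  shows "[b ^ n = 1] (mod (d::nat))"
proof -
  have "[b ^ n = a ^ n * b ^ n] (mod d)" using cong_scalar_right[OF cong_sym[OF assms(2)], of "b ^ n"] by simp
  also have "a ^ n * b ^ n = (a * b) ^ n" by (simp add: power_mult_distrib)
  also have "[(a * b) ^ n = 1 ^ n] (mod d)" by (rule cong_pow[OF assms(1)])
  finally show ?thesis by simp
qed

lemma black_map_period:
  assumes "odd d" "d > 1" "r < d"
  shows "(black_map d ^^ ord d 2) r = r"
proof -
  have "[half d ^ ord d 2 = 1] (mod d)"
    using power_of_inverse_cong[OF two_half_cong[OF assms(1)]] ord_works by blast
  moreover have "[(black_map d ^^ ord d 2) r = half d ^ ord d 2 * r] (mod d)"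
    by (rule funpow_linear_cong[where \<phi> = id, simplified]) (simp add: black_map_def cong_def)
  ultimately have "[(black_map d ^^ ord d 2) r = r] (mod d)"
    using cong_scalar_right[of _ 1 d r] cong_trans by fastforce
  moreover have "(black_map d ^^ ord d 2) r < d"
    using assms by (intro funpow_less) (simp_all add: black_map_def)
  ultimately show ?thesis using assms(3) by (simp add: cong_less_modulus_unique_nat)
qed

lemma red_map_period:
  assumes "odd d" "d > 1" "r < d" "[2 * a = 3] (mod d)"
  shows "(red_map d ^^ ord d a) r = r"
proof -
  have "[3 * half d = 2 * a * half d] (mod d)" using cong_scalar_right[OF assms(4)] cong_sym by blast
  also have "2 * a * half d = a * (2 * half d)" by simp
  also have "[a * (2 * half d) = a * 1] (mod d)" by (rule cong_scalar_left[OF two_half_cong[OF assms(1)]])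
  finally have "[(3 * half d) ^ ord d a = 1] (mod d)"
    using cong_pow ord_works cong_trans by (metis mult.right_neutral)
  moreover have "[Suc ((red_map d ^^ ord d a) r) = (3 * half d) ^ ord d a * Suc r] (mod d)"
    by (rule funpow_linear_cong[where \<phi> = Suc]) (rule red_map_shift_cong[OF assms(1)])
  ultimately have "[(red_map d ^^ ord d a) r + 1 = r + 1] (mod d)"
    using cong_scalar_right[of _ 1 d "Suc r"] cong_trans by fastforce
  then have "[(red_map d ^^ ord d a) r = r] (mod d)" by (simp only: cong_add_rcancel_nat)
  moreover have "(red_map d ^^ ord d a) r < d"
    using assms by (intro funpow_less) (simp_all add: red_map_def)
  ultimately show ?thesis using assms(3) by (simp add: cong_less_modulus_unique_nat)
qed

lemma black_cycles:
  assumes "odd d" "d > 1"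
  shows "\<exists>f. cycles_via (black_arrow d) {..<d} f \<and>
            (\<forall>r<d. black_arrow d r r \<longleftrightarrow> r = 0) \<and>
            (\<forall>r<d. cycle_len f r dvd ord d 2)"
proof (intro exI conjI allI impI)
  show "cycles_via (black_arrow d) {..<d} (black_map d)"
    using black_map_inj[OF assms(1)] black_arrow_odd_modulus[OF assms] assms(2)
    by (intro cycles_via_intro) (auto simp: black_map_def)
  show "black_arrow d r r \<longleftrightarrow> r = 0" if "r < d" for r
    using black_loop[OF assms(2) that] .
  show "cycle_len (black_map d) r dvd ord d 2" if "r < d" for r
    using cycle_len_dvd[OF black_map_period[OF assms that]] .
qed

lemma red_cycles:
  assumes "odd d" "\<not> 3 dvd d" "d > 1"
  shows "\<exists>g. cycles_via (red_arrow d) {..<d} g \<and>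
            (\<forall>r<d. red_arrow d r r \<longleftrightarrow> r = d - 1) \<and>
            (\<forall>r<d. \<forall>a. [2 * a = 3] (mod d) \<longrightarrow> cycle_len g r dvd ord d a)"
proof (intro exI conjI allI impI)
  show "cycles_via (red_arrow d) {..<d} (red_map d)"
    using red_map_inj[OF assms(1,2)] red_arrow_odd_modulus[OF assms(1,3)] assms(3)
    by (intro cycles_via_intro) (auto simp: red_map_def)
  show "red_arrow d r r \<longleftrightarrow> r = d - 1" if "r < d" for r
    using red_loop[OF assms(1,3) that] .
  show "cycle_len (red_map d) r dvd ord d a" if "r < d" "[2 * a = 3] (mod d)" for r a
    using cycle_len_dvd[OF red_map_period[OF assms(1,3) that]] .
qed

lemma cycles_coprime_to_6:
  assumes "gcd d 6 = 1" "d > 1"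
  shows "(\<exists>f. cycles_via (black_arrow d) {..<d} f \<and>
            (\<forall>r<d. black_arrow d r r \<longleftrightarrow> r = 0) \<and>
            (\<forall>r<d. cycle_len f r dvd ord d 2)) \<and>
       (\<exists>g. cycles_via (red_arrow d) {..<d} g \<and>
            (\<forall>r<d. red_arrow d r r \<longleftrightarrow> r = d - 1) \<and>
            (\<forall>r<d. \<forall>a. [2 * a = 3] (mod d) \<longrightarrow> cycle_len g r dvd ord d a))"
proof -
  have "odd d" "\<not> 3 dvd d"
    using assms(1) gcd_greatest[of 2 d 6] gcd_greatest[of 3 d 6] by auto
  then show ?thesis using black_cycles red_cycles assms(2) by blast
qed

lemma two_primroot_power_of_3:
  assumes "k > 0"
  shows "residue_primroot (3 ^ k) 2"
proof -
  have "[2 ^ 2 = 1] (mod (3::nat))" by (simp add: cong_def)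
  then have "ord 3 (2::nat) dvd 2" by (simp only: ord_divides)
  moreover have "ord 3 (2::nat) \<noteq> 1" using ord_works[of 2 3] by (auto simp: cong_def)
  ultimately have "ord 3 (2::nat) = 2" using two_is_prime_nat unfolding prime_nat_iff by blast
  then have "residue_primroot 3 2" by (simp add: residue_primroot_def totient_prime)
  moreover have "[2 ^ (3 - 1) \<noteq> 1] (mod (3::nat)\<^sup>2)" by (simp add: cong_def)
  ultimately show ?thesis
    using residue_primroot_prime_lift_iff[of 3 2] assms by simp
qed

lemma power_of_two_cong:
  assumes "k > 0" "\<not> 3 dvd (v::nat)"
  shows "\<exists>j. [2 ^ j = v] (mod 3 ^ k)"
proof -
  have "(3::nat) ^ k > 1" using one_less_power[of "3::nat" k] assms(1) by simp
  have "coprime 3 v" using assms(2) by (intro prime_imp_coprime) auto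
  then have "coprime v (3 ^ k)" by (simp add: coprime_commute)
  then have "coprime (v mod 3 ^ k) (3 ^ k)" using coprime_mod_left_iff[of "3 ^ k" v] by simp
  moreover have "v mod 3 ^ k \<noteq> 0"
    using assms dvd_trans[of 3 "3 ^ k" v] by (auto simp: dvd_eq_mod_eq_0[symmetric])
  ultimately have "v mod 3 ^ k \<in> totatives (3 ^ k)"
    by (simp add: in_totatives_iff order_less_imp_le)
  also have "totatives (3 ^ k) = (\<lambda>i. 2 ^ i mod 3 ^ k) ` {..<totient (3 ^ k)}"
    using residue_primroot_is_generator[OF \<open>3 ^ k > 1\<close> two_primroot_power_of_3[OF assms(1)]]
    unfolding bij_betw_def by simp
  finally obtain j where "2 ^ j mod 3 ^ k = v mod 3 ^ k" by auto
  then show ?thesis unfolding cong_def by blast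
qed

lemma black_map_dvd_iff:
  assumes "odd d" "e dvd d"
  shows "e dvd black_map d r \<longleftrightarrow> e dvd r"
proof -
  have "coprime e (half d)"
    using coprime_half[OF assms(1)] assms(2) by (meson coprime_commute coprime_imp_coprime dvd_trans dvd_refl)
  then show ?thesis
    unfolding black_map_def using dvd_mod_iff[OF assms(2)] by (simp add: coprime_dvd_mult_right_iff)
qed

lemma orbit_reverse:
  assumes "N > 0" "(f ^^ N) s = s" "(f ^^ j) s = b"
  shows "(f ^^ ((N - 1) * j)) b = s"
proof -
  have "((f ^^ N) ^^ j) s = s" using assms(2) by (induction j) simp_all
  then have "(f ^^ ((N - 1) * j + j)) s = s"
    using assms(1) by (simp add: funpow_mult algebra_simps)
  then show ?thesis using assms(3) by (simp add: funpow_add)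
qed

definition valuation_layer :: "nat \<Rightarrow> nat \<Rightarrow> nat set" where
  "valuation_layer d i = {r. r < d \<and> 3 ^ i dvd r \<and> \<not> 3 ^ (i + 1) dvd r}"

text \<open>Every node of the i-th layer reaches 3^i under the black map, since it is 3^i times a power of 2.\<close>

lemma black_orbit_reaches_power_of_3:
  assumes "d = 3 ^ m" "i < m" "s \<in> valuation_layer d i"
  shows "\<exists>j. (black_map d ^^ j) s = 3 ^ i"
proof -
  obtain v where v: "s = 3 ^ i * v" "\<not> 3 dvd v"
    using assms(3) unfolding valuation_layer_def by (auto simp: power_add)
  obtain j where "[2 ^ j = v] (mod 3 ^ (m - i))"
    using power_of_two_cong[of "m - i", OF _ v(2)] assms(2) by auto
  then have "[3 ^ i * 2 ^ j = s] (mod 3 ^ i * 3 ^ (m - i))"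
    unfolding v(1) by (rule cong_cmult_leftI)
  then have s_cong: "[s = 2 ^ j * 3 ^ i] (mod d)"
    using assms(1,2) by (simp add: power_add[symmetric] cong_sym_eq ac_simps)
  have odd_d: "odd d" using assms(1) by simp
  have "[(black_map d ^^ j) s = half d ^ j * s] (mod d)"
    by (rule funpow_linear_cong[where \<phi> = id, simplified]) (simp add: black_map_def cong_def)
  also have "[half d ^ j * s = half d ^ j * (2 ^ j * 3 ^ i)] (mod d)"
    using s_cong by (rule cong_scalar_left)
  also have "half d ^ j * (2 ^ j * 3 ^ i) = (2 * half d) ^ j * 3 ^ i"
    by (simp add: power_mult_distrib)
  also have "[(2 * half d) ^ j * 3 ^ i = 1 ^ j * 3 ^ i] (mod d)"
    using two_half_cong[OF odd_d] by (intro cong_scalar_right cong_pow)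
  finally have "[(black_map d ^^ j) s = 3 ^ i] (mod d)" by simp
  moreover have "(black_map d ^^ j) s < d"
    using assms(3) assms(1) by (intro funpow_less) (auto simp: valuation_layer_def black_map_def)
  moreover have "(3::nat) ^ i < d" using assms(1,2) by simp
  ultimately have "(black_map d ^^ j) s = 3 ^ i" by (rule cong_less_modulus_unique_nat)
  then show ?thesis ..
qed

lemma black_single_cycle_layer:
  assumes "d = 3 ^ m" "i < m"
  shows "single_cycle (black_arrow d) (valuation_layer d i)"
proof -
  let ?S = "valuation_layer d i" and ?f = "black_map d"
  have odd_d: "odd d" using assms(1) by simp
  have d_gt_1: "d > 1" using assms one_less_power[of "3::nat" m] by simp
  have base: "3 ^ i \<in> ?S" using assms by (simp add: valuation_layer_def power_add)
  have layer_dvd: "3 ^ i dvd d" "3 ^ (i + 1) dvd d"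
    using assms le_imp_power_dvd[of i m 3] le_imp_power_dvd[of "i + 1" m 3] by simp_all
  have "cycles_via (black_arrow d) ?S ?f"
  proof (rule cycles_via_intro)
    show "finite ?S" unfolding valuation_layer_def by simp
    show "?f ` ?S \<subseteq> ?S"
      using black_map_dvd_iff[OF odd_d layer_dvd(1)] black_map_dvd_iff[OF odd_d layer_dvd(2)] d_gt_1
      by (auto simp: valuation_layer_def black_map_def)
    show "inj_on ?f ?S"
      using black_map_inj[OF odd_d] by (rule inj_on_subset) (auto simp: valuation_layer_def)
    show "\<forall>r\<in>?S. \<forall>s. black_arrow d r s \<longleftrightarrow> s = ?f r"
      using black_arrow_odd_modulus[OF odd_d d_gt_1] by (auto simp: valuation_layer_def)
  qed
  moreover have "\<exists>k. (?f ^^ k) r = s" if r: "r \<in> ?S" and s: "s \<in> ?S" for r s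
  proof -
    \<comment> \<open>Go from \<open>r\<close> to the base point \<open>3^i\<close>, then reverse the path from \<open>s\<close> to \<open>3^i\<close>.\<close>
    obtain j where j: "(?f ^^ j) r = 3 ^ i"
      using black_orbit_reaches_power_of_3[OF assms r] by blast
    obtain l where l: "(?f ^^ l) s = 3 ^ i"
      using black_orbit_reaches_power_of_3[OF assms s] by blast
    have "ord d 2 > 0" using odd_d by (simp add: ord_eq_0 coprime_commute)
    moreover have "(?f ^^ ord d 2) s = s"
      using black_map_period[OF odd_d d_gt_1] s by (simp add: valuation_layer_def)
    ultimately have "(?f ^^ ((ord d 2 - 1) * l)) (3 ^ i) = s" using l by (rule orbit_reverse)
    then have "(?f ^^ ((ord d 2 - 1) * l + j)) r = s" using j by (simp add: funpow_add)
    then show ?thesis ..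
  qed
  ultimately show ?thesis unfolding single_cycle_def using base by blast
qed

lemma coprime_3_iff: "coprime (n::nat) 3 \<longleftrightarrow> \<not> 3 dvd n"
proof
  show "\<not> 3 dvd n \<Longrightarrow> coprime n 3"
    using prime_imp_coprime[of "3::nat" n] by (simp add: coprime_commute)
qed (auto dest: coprime_common_divisor)

lemma black_cycles_power_of_3:
  assumes "d = 3 ^ m" "d > 1"
  shows "single_cycle (black_arrow d) {r. r < d \<and> coprime r 3} \<and>
       (\<forall>i\<in>{1..m-1}. single_cycle (black_arrow d) {r. r < d \<and> 3 ^ i dvd r \<and> \<not> 3 ^ (i+1) dvd r}) \<and>
       black_arrow d 0 0"
proof -
  have "m > 0" using assms by (cases m) auto
  have "{r. r < d \<and> coprime r 3} = valuation_layer d 0"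
    by (simp add: valuation_layer_def coprime_3_iff)
  then have "single_cycle (black_arrow d) {r. r < d \<and> coprime r 3}"
    using black_single_cycle_layer[OF assms(1) \<open>m > 0\<close>] by simp
  moreover have "single_cycle (black_arrow d) {r. r < d \<and> 3 ^ i dvd r \<and> \<not> 3 ^ (i+1) dvd r}"
    if "i \<in> {1..m-1}" for i
    using black_single_cycle_layer[OF assms(1), of i] that unfolding valuation_layer_def by auto
  moreover have "black_arrow d 0 0" using black_loop[OF assms(2)] assms(2) by simp
  ultimately show ?thesis by blast
qed

lemma red_map_iterate_power_of_3:
  assumes "d = 3 ^ m"
  shows "[Suc ((red_map d ^^ k) r) = 3 ^ k * (half d ^ k * Suc r)] (mod d)"
proof -
  have "[Suc ((red_map d ^^ k) r) = (3 * half d) ^ k * Suc r] (mod d)"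
    by (rule funpow_linear_cong[where \<phi> = Suc]) (rule red_map_shift_cong, simp add: assms)
  also have "(3 * half d) ^ k * Suc r = 3 ^ k * (half d ^ k * Suc r)"
    by (simp only: power_mult_distrib mult.assoc)
  finally show ?thesis .
qed

lemma last_residue_iff:
  assumes "x < (d::nat)"
  shows "x = d - 1 \<longleftrightarrow> d dvd Suc x"
  using assms by (auto dest: dvd_imp_le)

text \<open>After m steps the factor 3^m kills everything: all red paths end at d - 1 ...\<close>

lemma red_map_reaches_root:
  assumes "d = 3 ^ m" "d > 1" "r < d"
  shows "(red_map d ^^ m) r = d - 1"
proof -
  have "[3 ^ m * (half d ^ m * Suc r) = 0] (mod d)" using assms(1) by (simp add: cong_0_iff)
  then have "[Suc ((red_map d ^^ m) r) = 0] (mod d)"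
    by (rule cong_trans[OF red_map_iterate_power_of_3[OF assms(1)]])
  moreover have "(red_map d ^^ m) r < d"
    using assms by (intro funpow_less) (simp_all add: red_map_def)
  ultimately show ?thesis using last_residue_iff by (simp add: cong_0_iff)
qed

text \<open>... and a leaf (r + 1 prime to 3) needs all m steps, because half d is prime to 3.\<close>

lemma red_map_depth:
  assumes "d = 3 ^ m" "r < d" "\<not> 3 dvd Suc r" "k < m"
  shows "(red_map d ^^ k) r \<noteq> d - 1"
proof
  assume "(red_map d ^^ k) r = d - 1"
  moreover have "(red_map d ^^ k) r < d"
    using assms by (intro funpow_less) (simp_all add: red_map_def)
  ultimately have "d dvd Suc ((red_map d ^^ k) r)" by (simp add: last_residue_iff)
  then have "d dvd 3 ^ k * (half d ^ k * Suc r)"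
    using red_map_iterate_power_of_3[OF assms(1), of k r] by (simp add: cong_dvd_iff)
  moreover have "d = 3 ^ k * 3 ^ (m - k)" using assms(1,4) by (simp add: power_add[symmetric])
  ultimately have "3 ^ (m - k) dvd half d ^ k * Suc r" by simp
  moreover have "(3::nat) dvd 3 ^ (m - k)" using assms(4) by (cases "m - k") auto
  ultimately have "3 dvd half d ^ k * Suc r" by (rule dvd_trans[rotated])
  moreover have "coprime 3 (half d ^ k)"
    using coprime_half[of d] assms(1,4) by (cases m) (simp_all add: coprime_power_left_iff coprime_commute)
  ultimately have "3 dvd Suc r" using coprime_dvd_mult_right_iff by blast
  with assms(3) show False ..
qed

lemma red_tree_power_of_3:
  assumes "d = 3 ^ m" "d > 1"
  shows "\<exists>g. (\<forall>r<d. \<forall>s. red_arrow d r s \<longleftrightarrow> s = g r) \<and>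
            g (d - 1) = d - 1 \<and>
            (\<forall>r<d. g r = r \<longrightarrow> r = d - 1) \<and>
            (\<forall>r<d. \<exists>k. (g ^^ k) r = d - 1) \<and>
            (\<forall>r<d. (\<not> (\<exists>s. red_arrow d s r)) \<longleftrightarrow> r mod 3 \<noteq> 2) \<and>
            (\<forall>r<d. r mod 3 \<noteq> 2 \<longrightarrow> (g ^^ m) r = d - 1 \<and> (\<forall>k<m. (g ^^ k) r \<noteq> d - 1))"
proof (intro exI[of _ "red_map d"] conjI allI impI)
  have odd_d: "odd d" using assms(1) by simp
  show arrows: "red_arrow d r s \<longleftrightarrow> s = red_map d r" if "r < d" for r s
    using red_arrow_odd_modulus[OF odd_d assms(2), of r s] that by simp
  have loops: "red_map d r = r \<longleftrightarrow> r = d - 1" if "r < d" for r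
    using red_loop[OF odd_d assms(2) that] arrows[OF that, of r] by (simp add: eq_commute)
  show "red_map d (d - 1) = d - 1" using loops[of "d - 1"] assms(2) by simp
  show "r = d - 1" if "r < d" "red_map d r = r" for r
    using loops[OF that(1)] that(2) by simp
  show root: "(red_map d ^^ m) r = d - 1" if "r < d" for r
    using red_map_reaches_root[OF assms that] .
  show "\<exists>k. (red_map d ^^ k) r = d - 1" if "r < d" for r
    using root[OF that] ..
  have "3 dvd d" using assms by (cases m) auto
  show "(\<not> (\<exists>s. red_arrow d s r)) \<longleftrightarrow> r mod 3 \<noteq> 2" if "r < d" for r
    using red_in_multiple_of_3[OF \<open>3 dvd d\<close> assms(2) that] by simp
  show "(red_map d ^^ k) r \<noteq> d - 1" if "r < d" "r mod 3 \<noteq> 2" "k < m" for r k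
  proof -
    have "\<not> 3 dvd Suc r" using that(2) by presburger
    then show ?thesis using red_map_depth[OF assms(1) that(1) _ that(3)] by simp
  qed
qed

theorem mainTheorem13:
  fixes d :: nat
  assumes "d > 1"
  shows
   \<comment> \<open>(a)\<close>
   "(even d \<longrightarrow> (\<forall>r<d.
        (even r \<longrightarrow> card {s. black_arrow d r s} = 2 \<and> {s. red_arrow d r s} = {}) \<and>
        (odd r \<longrightarrow> card {s. red_arrow d r s} = 2 \<and> {s. black_arrow d r s} = {}))) \<and>
    (odd d \<longrightarrow> (\<forall>r<d. card {s. black_arrow d r s} = 1 \<and> card {s. red_arrow d r s} = 1)) \<and>
   \<comment> \<open>(b)\<close>
    (3 dvd d \<longrightarrow> (\<forall>r<d.
        (r mod 3 = 2 \<longrightarrow> card {s. black_arrow d s r} = 1 \<and> {s. red_arrow d s r} \<noteq> {}) \<and>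
        (r mod 3 \<noteq> 2 \<longrightarrow> card {s. black_arrow d s r} = 1 \<and> {s. red_arrow d s r} = {}))) \<and>
    (\<not> 3 dvd d \<longrightarrow> (\<forall>r<d. card {s. black_arrow d s r} = 1 \<and> card {s. red_arrow d s r} = 1)) \<and>
   \<comment> \<open>(c)\<close>
    (gcd d 6 = 1 \<longrightarrow>
       (\<exists>f. cycles_via (black_arrow d) {..<d} f \<and>
            (\<forall>r<d. black_arrow d r r \<longleftrightarrow> r = 0) \<and>
            (\<forall>r<d. cycle_len f r dvd ord d 2)) \<and>
       (\<exists>g. cycles_via (red_arrow d) {..<d} g \<and>
            (\<forall>r<d. red_arrow d r r \<longleftrightarrow> r = d - 1) \<and>
            (\<forall>r<d. \<forall>a. [2 * a = 3] (mod d) \<longrightarrow> cycle_len g r dvd ord d a))) \<and>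
   \<comment> \<open>(d)\<close>
    (\<forall>m. d = 3 ^ m \<longrightarrow>
       single_cycle (black_arrow d) {r. r < d \<and> coprime r 3} \<and>
       (\<forall>i\<in>{1..m-1}. single_cycle (black_arrow d) {r. r < d \<and> 3 ^ i dvd r \<and> \<not> 3 ^ (i+1) dvd r}) \<and>
       black_arrow d 0 0) \<and>
   \<comment> \<open>(e)\<close>
    (\<forall>m. d = 3 ^ m \<longrightarrow>
       (\<exists>g. (\<forall>r<d. \<forall>s. red_arrow d r s \<longleftrightarrow> s = g r) \<and>
            g (d - 1) = d - 1 \<and>
            (\<forall>r<d. g r = r \<longrightarrow> r = d - 1) \<and>
            (\<forall>r<d. \<exists>k. (g ^^ k) r = d - 1) \<and>
            (\<forall>r<d. (\<not> (\<exists>s. red_arrow d s r)) \<longleftrightarrow> r mod 3 \<noteq> 2) \<and>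
            (\<forall>r<d. r mod 3 \<noteq> 2 \<longrightarrow> (g ^^ m) r = d - 1 \<and> (\<forall>k<m. (g ^^ k) r \<noteq> d - 1))))"
  using impI[OF out_arrows_even_modulus[OF _ assms]] impI[OF out_arrows_odd_modulus[OF _ assms]]
    impI[OF in_arrows_multiple_of_3[OF _ assms]] impI[OF in_arrows_not_multiple_of_3[OF _ assms]]
    impI[OF cycles_coprime_to_6[OF _ assms]]
    allI[OF impI[OF black_cycles_power_of_3[OF _ assms]]] allI[OF impI[OF red_tree_power_of_3[OF _ assms]]]
  by (intro conjI) assumption+

end
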